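(* Let $n\ge1$ and $g\in\mathcal G_n$. Then there are exactly $2^n$ uphills from $1$ to $g$, exactly $2^n$ downhills from $g$ to $1$, and exactly $2^{2n}$ mountains with peak $g$.
   Context: Let $X$ be a nonempty set and $X'=\{x':x\in X\}$ a disjoint copy of $X$; let $1$ be a new symbol and $A=X\cup X'\cup\{1\}$ (the anchors), with the involution $1'=1$, $(x)'=x'$, $(x')'=x$ for $x\in X$. For a 5-tuple $g$ write $g=(g^l,g^{la},g^c,g^{ra},g^r)$ (left entry, left anchor, middle entry, right anchor, right entry); the notation iterates, e.g. for $s\in\{l,r\}$, $g^{ls}$ is the $s$-entry of $g^l$ and $g^{lsa}$ is the $s$-anchor of $g^l$. Define $\mathcal G_0=\{1\}$; $\mathcal G_{1,e}=\{g_{xx'}:x\in X\}$ where $g_{xx'}=(1,1,xx',x',1)$ (the middle entry is a formal symbol), and $\mathcal G_{1,d}=\emptyset$. For $i\ge 2$: $\mathcal G_{i,e}=\{(g,(g^{la})',g^l,(g^{ra})',g),\ (g,(g^{ra})',g^l,(g^{la})',g) : g\in\mathcal G_{i-1,e}\}$, and $\mathcal G_{i,d}$ is the set of all $g\in\mathcal G_{i-1}\times A\times\mathcal G_{i-2}\times A\times\mathcal G_{i-1}$ such that $g^l\neq g^r$, $(g^c,g^{la})=(g^{ls},(g^{lsa})')$ for some $s\in\{l,r\}$, and $(g^c,g^{ra})=(g^{rt},(g^{rta})')$ for some $t\in\{l,r\}$; here $\mathcal G_i=\mathcal G_{i,d}\cup\mathcal G_{i,e}$ for $i\ge1$. Put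 $\mathcal G^5=\bigcup_{i\ge1}\mathcal G_i$, $\mathcal G=\mathcal G^5\cup A$, $\mathcal G'=\mathcal G^5\cup\{1\}$ (the symbol $1$ is used both as an anchor and as a letter of $\mathcal G'$). The height of $g\in\mathcal G_i$ is $i$; $1$ has height $0$. Words are elements of the free semigroup $\mathcal G^+$. A triplet $g_1ag_2$ with $g_1,g_2\in\mathcal G'$, $a\in A$ is left anchored if $g_2\in\mathcal G^5$ and $(g_1,a)=(g_2^s,g_2^{sa})$ for some $s\in\{l,r\}$, and right anchored if $g_1\in\mathcal G^5$ and $(g_2,a)=(g_1^s,(g_1^{sa})')$ for some $s\in\{l,r\}$; it is anchored if it is left or right anchored. An uphill from $h$ to $g$ is a word $g_0a_1g_1\cdots a_mg_m$ ($g_i\in\mathcal G'$, $a_i\in A$) with $g_0=h$, $g_m=g$, each $g_{i-1}a_ig_i$ anchored and height$(g_i)=$height$(g_{i-1})+1$ for all $i$; a downhill from $g$ to $h$ is defined the same way with height$(g_i)=$height$(g_{i-1})-1$. A mountain with peak $g$ (for $g\in\mathcal G^5$) is a word $u*v$ where $u$ is an uphill from $1$ to $g$ and $v$ is a downhill from $g$ to $1$, and $u*v$ denotes the concatenation of $u$ and $v$ with the common letter $g$ written only once. *)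

theory Defs
  imports Main
begin

text \<open>The set X is represented by the universe of a type variable 'x (types are nonempty).
Anchors A = X \<union> X' \<union> {1}.\<close>

datatype 'x anchor = AOne | APlain 'x | APrime 'x

fun ainv :: "'x anchor \<Rightarrow> 'x anchor" where
  "ainv AOne = AOne"
| "ainv (APlain x) = APrime x"
| "ainv (APrime x) = APlain x"

text \<open>Generators: the letter 1, the formal middle symbols x x', and 5-tuples
  (left entry, left anchor, middle entry, right anchor, right entry).\<close>

datatype 'x gen =
    GOne
  | GSym 'x
  | Tup (gl: "'x gen") (gla: "'x anchor") (gc: "'x gen") (gra: "'x anchor") (gr: "'x gen")

datatype side = SL | SR

fun entry :: "'x gen \<Rightarrow> side \<Rightarrow> 'x gen" where
  "entry g SL = gl g"
| "entry g SR = gr g"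

fun anch :: "'x gen \<Rightarrow> side \<Rightarrow> 'x anchor" where
  "anch g SL = gla g"
| "anch g SR = gra g"

definition gxx :: "'x \<Rightarrow> 'x gen" where
  "gxx x = Tup GOne AOne (GSym x) (APrime x) GOne"

text \<open>Extension part \<G>_{i,e}, for i \<ge> 1 (index 0 unused, set empty).\<close>
fun Ge :: "nat \<Rightarrow> 'x gen set" where
  "Ge 0 = {}"
| "Ge (Suc 0) = range gxx"
| "Ge (Suc (Suc i)) =
     {Tup g (ainv (gla g)) (gl g) (ainv (gra g)) g | g. g \<in> Ge (Suc i)}
   \<union> {Tup g (ainv (gra g)) (gl g) (ainv (gla g)) g | g. g \<in> Ge (Suc i)}"

definition Gd_step :: "'x gen set \<Rightarrow> 'x gen set \<Rightarrow> 'x gen set" where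
  "Gd_step P Q = {Tup l a c b r | l a c b r.
      l \<in> P \<and> a \<in> UNIV \<and> c \<in> Q \<and> b \<in> UNIV \<and> r \<in> P \<and> l \<noteq> r \<and>
      (\<exists>s. (c, a) = (entry l s, ainv (anch l s))) \<and>
      (\<exists>t. (c, b) = (entry r t, ainv (anch r t)))}"

text \<open>\<G>_i: \<G>_0 = {1}, \<G>_1 = \<G>_{1,e} (as \<G>_{1,d} is empty),
  \<G>_i = \<G>_{i,d} \<union> \<G>_{i,e} for i \<ge> 2.\<close>
fun Gs :: "nat \<Rightarrow> 'x gen set" where
  "Gs 0 = {GOne}"
| "Gs (Suc 0) = Ge (Suc 0)"
| "Gs (Suc (Suc i)) = Gd_step (Gs (Suc i)) (Gs i) \<union> Ge (Suc (Suc i))"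

definition G5 :: "'x gen set" where
  "G5 = (\<Union>i\<in>{1..}. Gs i)"

definition Gprime :: "'x gen set" where
  "Gprime = G5 \<union> {GOne}"

definition height :: "'x gen \<Rightarrow> nat" where
  "height g = (THE i. g \<in> Gs i)"

definition left_anchored :: "'x gen \<Rightarrow> 'x anchor \<Rightarrow> 'x gen \<Rightarrow> bool" where
  "left_anchored g1 a g2 \<longleftrightarrow> g2 \<in> G5 \<and> (\<exists>s. (g1, a) = (entry g2 s, anch g2 s))"

definition right_anchored :: "'x gen \<Rightarrow> 'x anchor \<Rightarrow> 'x gen \<Rightarrow> bool" where
  "right_anchored g1 a g2 \<longleftrightarrow> g1 \<in> G5 \<and> (\<exists>s. (g2, a) = (entry g1 s, ainv (anch g1 s)))"

definition anchored :: "'x gen \<Rightarrow> 'x anchor \<Rightarrow> 'x gen \<Rightarrow> bool" where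
  "anchored g1 a g2 \<longleftrightarrow> left_anchored g1 a g2 \<or> right_anchored g1 a g2"

text \<open>Letters of words (elements of \<G> = \<G>^5 \<union> A); words are nonempty lists of letters.\<close>
datatype 'x letter = LG "'x gen" | LA "'x anchor"

text \<open>The word g_0 a_1 g_1 ... a_m g_m.\<close>
definition mkword :: "'x gen list \<Rightarrow> 'x anchor list \<Rightarrow> 'x letter list" where
  "mkword gs as = LG (hd gs) # concat (map2 (\<lambda>a g. [LA a, LG g]) as (tl gs))"

definition hill :: "int \<Rightarrow> 'x gen \<Rightarrow> 'x gen \<Rightarrow> 'x letter list \<Rightarrow> bool" where
  "hill d h g w \<longleftrightarrow> (\<exists>gs as. length gs = Suc (length as) \<and> w = mkword gs as \<and>
      hd gs = h \<and> last gs = g \<and> set gs \<subseteq> Gprime \<and>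
      (\<forall>i<length as. anchored (gs ! i) (as ! i) (gs ! Suc i) \<and>
         int (height (gs ! Suc i)) = int (height (gs ! i)) + d))"

definition uphill :: "'x gen \<Rightarrow> 'x gen \<Rightarrow> 'x letter list \<Rightarrow> bool" where
  "uphill h g w \<longleftrightarrow> hill 1 h g w"

definition downhill :: "'x gen \<Rightarrow> 'x gen \<Rightarrow> 'x letter list \<Rightarrow> bool" where
  "downhill g h w \<longleftrightarrow> hill (-1) g h w"

text \<open>u * v: concatenation with the common letter g written once.\<close>
definition mountain :: "'x gen \<Rightarrow> 'x letter list \<Rightarrow> bool" where
  "mountain g w \<longleftrightarrow> g \<in> G5 \<and>
     (\<exists>u v. uphill GOne g u \<and> downhill g GOne v \<and> w = u @ tl v)"

end

theory Submission
  imports Defs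
begin

text \<open>A downhill from g \<in> \<G>_{n+1} must start with a right-anchored step to one of the two
  entries of g, since a left-anchored step would make g an entry of an element of height n.
  The two possible first steps are distinct, so descending from g doubles the count at each
  level, giving 2^n downhills. Reversing a word and inverting its anchors exchanges uphills
  and downhills, and a mountain is an uphill and a downhill glued at a peak whose position
  is fixed by the height, whence 2^n \<cdot> 2^n mountains.\<close>

fun left_depth :: "'x gen \<Rightarrow> nat" where
  "left_depth (Tup l a c b r) = Suc (left_depth l)"
| "left_depth GOne = 0"
| "left_depth (GSym x) = 0"

lemma ainv_ainv [simp]: "ainv (ainv a) = a"
  by (cases a) auto

lemma ainv_eq_iff [simp]: "ainv a = ainv b \<longleftrightarrow> a = b"
  by (metis ainv_ainv)

lemma UNIV_side: "(UNIV :: side set) = {SL, SR}"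
  using side.exhaust by auto

lemma Ge_subset_Gs: "Ge i \<subseteq> Gs i"
  by (induct i rule: Gs.induct) auto

lemma Ge_anchors_distinct: "g \<in> Ge (Suc i) \<Longrightarrow> gla g \<noteq> gra g"
proof (induct i arbitrary: g)
  case 0
  then show ?case by (auto simp: gxx_def)
next
  case (Suc i)
  then obtain h where h: "h \<in> Ge (Suc i)" and
    "g = Tup h (ainv (gla h)) (gl h) (ainv (gra h)) h \<or>
     g = Tup h (ainv (gra h)) (gl h) (ainv (gla h)) h"
    by auto
  with Suc.hyps[OF h] show ?case by auto
qed

lemma Gs_SucE:
  assumes "g \<in> Gs (Suc i)"
  obtains l a c b r where "g = Tup l a c b r" "l \<in> Gs i" "r \<in> Gs i" "(l, a) \<noteq> (r, b)"
proof (cases i)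
  case 0
  with assms that show ?thesis by (auto simp: gxx_def)
next
  case (Suc j)
  with assms have "g \<in> Gd_step (Gs (Suc j)) (Gs j) \<or> g \<in> Ge (Suc (Suc j))" by simp
  then show ?thesis
  proof
    assume "g \<in> Gd_step (Gs (Suc j)) (Gs j)"
    with Suc that show ?thesis by (auto simp: Gd_step_def)
  next
    assume "g \<in> Ge (Suc (Suc j))"
    then obtain h where h: "h \<in> Ge (Suc j)" and
      "g = Tup h (ainv (gla h)) (gl h) (ainv (gra h)) h \<or>
       g = Tup h (ainv (gra h)) (gl h) (ainv (gla h)) h"
      by auto
    moreover have "h \<in> Gs i" using h Ge_subset_Gs Suc by blast
    moreover have "gla h \<noteq> gra h" using Ge_anchors_distinct[OF h] .
    ultimately show ?thesis using that by auto
  qed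
qed

lemma left_depth_Gs: "g \<in> Gs i \<Longrightarrow> left_depth g = i"
  by (induct i arbitrary: g) (auto elim: Gs_SucE)

lemma Gs_disjoint: "g \<in> Gs i \<Longrightarrow> g \<in> Gs j \<Longrightarrow> i = j"
  using left_depth_Gs by metis

lemma height_Gs: "g \<in> Gs i \<Longrightarrow> height g = i"
  unfolding height_def by (rule the_equality) (simp_all add: Gs_disjoint)

lemma entry_Gs: "g \<in> Gs (Suc i) \<Longrightarrow> entry g s \<in> Gs i"
  by (cases s) (auto elim: Gs_SucE)

lemma entry_anch_inj:
  "g \<in> Gs (Suc i) \<Longrightarrow> (entry g s, anch g s) = (entry g t, anch g t) \<Longrightarrow> s = t"
  by (cases s; cases t) (auto elim: Gs_SucE)

lemma G5_iff: "g \<in> G5 \<longleftrightarrow> (\<exists>i. g \<in> Gs (Suc i))"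
proof
  assume "g \<in> G5"
  then obtain i where "i \<ge> 1" "g \<in> Gs i" unfolding G5_def by blast
  then show "\<exists>i. g \<in> Gs (Suc i)" by (metis Suc_pred' less_eq_Suc_le One_nat_def)
next
  assume "\<exists>i. g \<in> Gs (Suc i)"
  then show "g \<in> G5" unfolding G5_def by force
qed

lemma Gprime_iff: "g \<in> Gprime \<longleftrightarrow> (\<exists>i. g \<in> Gs i)"
proof
  assume "g \<in> Gprime"
  then show "\<exists>i. g \<in> Gs i" by (auto simp: Gprime_def G5_iff intro: exI[of _ 0])
next
  assume "\<exists>i. g \<in> Gs i"
  then obtain i where "g \<in> Gs i" by blast
  then show "g \<in> Gprime" by (cases i) (auto simp: Gprime_def G5_iff)
qed

lemma Gprime_Gs_height: "g \<in> Gprime \<Longrightarrow> g \<in> Gs (height g)"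
  by (auto simp: Gprime_iff height_Gs)

lemma left_anchored_iff_right_anchored:
  "left_anchored g1 a g2 \<longleftrightarrow> right_anchored g2 (ainv a) g1"
  by (simp add: left_anchored_def right_anchored_def)

lemma anchored_swap: "anchored g1 a g2 \<longleftrightarrow> anchored g2 (ainv a) g1"
  unfolding anchored_def
  using left_anchored_iff_right_anchored[of g1 a g2] left_anchored_iff_right_anchored[of g2 "ainv a" g1]
  by auto

lemma anchored_from_above:
  assumes g: "g \<in> Gs (Suc n)" and h: "h \<in> Gs n"
  shows "anchored g a h \<longleftrightarrow> (\<exists>s. h = entry g s \<and> a = ainv (anch g s))"
proof -
  have "\<not> left_anchored g a h"
  proof
    assume "left_anchored g a h"
    then obtain m s where hm: "h \<in> Gs (Suc m)" and "g = entry h s"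
      unfolding left_anchored_def G5_iff by auto
    then have "g \<in> Gs m" using entry_Gs by blast
    moreover have "n = Suc m" using Gs_disjoint[OF h hm] .
    ultimately show False using Gs_disjoint[OF g] by fastforce
  qed
  moreover have "g \<in> G5" using g G5_iff by blast
  ultimately show ?thesis unfolding anchored_def right_anchored_def by auto
qed

inductive hill_rec :: "int \<Rightarrow> 'x gen \<Rightarrow> 'x gen \<Rightarrow> 'x letter list \<Rightarrow> bool" for d where
  hill_rec_single: "g \<in> Gprime \<Longrightarrow> hill_rec d g g [LG g]"
| hill_rec_Cons: "\<lbrakk>h \<in> Gprime; anchored h a h'; int (height h') = int (height h) + d;
     hill_rec d h' g w\<rbrakk> \<Longrightarrow> hill_rec d h g (LG h # LA a # w)"

lemma mkword_Cons: "gs \<noteq> [] \<Longrightarrow> mkword (h # gs) (a # as) = LG h # LA a # mkword gs as"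
  by (cases gs) (simp_all add: mkword_def)

lemma hill_rec_imp_hill: "hill_rec d h g w \<Longrightarrow> hill d h g w"
proof (induction rule: hill_rec.induct)
  case (hill_rec_single g)
  then show ?case unfolding hill_def
    by (intro exI[of _ "[g]"] exI[of _ "[]"]) (simp add: mkword_def)
next
  case (hill_rec_Cons h a h' g w)
  then obtain gs as where "length gs = Suc (length as)" "w = mkword gs as" "hd gs = h'"
    "last gs = g" "set gs \<subseteq> Gprime"
    "\<forall>i<length as. anchored (gs ! i) (as ! i) (gs ! Suc i) \<and>
        int (height (gs ! Suc i)) = int (height (gs ! i)) + d"
    unfolding hill_def by blast
  with hill_rec_Cons.hyps show ?case unfolding hill_def
    by (intro exI[of _ "h # gs"] exI[of _ "a # as"])
      (auto simp: mkword_Cons All_less_Suc2 hd_conv_nth)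
qed

lemma hill_rec_mkword:
  assumes "length gs = Suc (length as)" "set gs \<subseteq> Gprime"
    "\<forall>i<length as. anchored (gs ! i) (as ! i) (gs ! Suc i) \<and>
        int (height (gs ! Suc i)) = int (height (gs ! i)) + d"
  shows "hill_rec d (hd gs) (last gs) (mkword gs as)"
  using assms
proof (induction as arbitrary: gs)
  case Nil
  then obtain g where "gs = [g]" by (cases gs) auto
  with Nil show ?case by (simp add: mkword_def hill_rec_single)
next
  case (Cons a as)
  then obtain h gs' where gs: "gs = h # gs'" "gs' \<noteq> []" by (cases gs) force+
  with Cons.prems have "hill_rec d (hd gs') (last gs') (mkword gs' as)"
    by (intro Cons.IH) (auto simp: All_less_Suc2)
  with gs Cons.prems show ?case
    by (auto simp: mkword_Cons All_less_Suc2 hd_conv_nth intro!: hill_rec_Cons)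
qed

lemma hill_iff_hill_rec: "hill d h g w \<longleftrightarrow> hill_rec d h g w"
  using hill_rec_mkword hill_rec_imp_hill unfolding hill_def by metis

lemma hill_rec_Gprime: "hill_rec d h g w \<Longrightarrow> h \<in> Gprime"
  by (erule hill_rec.cases) simp_all

lemma hill_rec_hd: "hill_rec d h g w \<Longrightarrow> w \<noteq> [] \<and> hd w = LG h"
  by (erule hill_rec.cases) simp_all

lemma hill_rec_snoc:
  "\<lbrakk>hill_rec d h g w; g' \<in> Gprime; anchored g a g'; int (height g') = int (height g) + d\<rbrakk>
   \<Longrightarrow> hill_rec d h g' (w @ [LA a, LG g'])"
  by (induction rule: hill_rec.induct) (auto intro: hill_rec.intros)

fun ainv_letter :: "'x letter \<Rightarrow> 'x letter" where
  "ainv_letter (LG g) = LG g"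
| "ainv_letter (LA a) = LA (ainv a)"

definition reverse_word :: "'x letter list \<Rightarrow> 'x letter list" where
  "reverse_word w = rev (map ainv_letter w)"

lemma ainv_letter_ainv_letter [simp]: "ainv_letter (ainv_letter l) = l"
  by (cases l) simp_all

lemma reverse_word_reverse_word [simp]: "reverse_word (reverse_word w) = w"
  by (simp add: reverse_word_def rev_map comp_def)

lemma hill_rec_reverse_word: "hill_rec d h g w \<Longrightarrow> hill_rec (- d) g h (reverse_word w)"
proof (induction rule: hill_rec.induct)
  case (hill_rec_single g)
  then show ?case by (simp add: reverse_word_def hill_rec.hill_rec_single)
next
  case (hill_rec_Cons h a h' g w)
  then show ?case
    by (simp add: reverse_word_def hill_rec_snoc anchored_swap[of h a h'])
qed

lemma hill_rec_length:
  "hill_rec d h g w \<Longrightarrow> 2 * (int (height g) - int (height h)) = d * (int (length w) - 1)"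
  by (induction rule: hill_rec.induct) (auto simp: algebra_simps)

lemma height_GOne [simp]: "height GOne = 0"
  by (simp add: height_Gs)

lemma GOne_Gprime [simp]: "GOne \<in> Gprime"
  by (simp add: Gprime_def)

lemma descents_GOne: "{w. hill_rec (-1) GOne GOne w} = {[LG GOne]}"
  by (auto elim: hill_rec.cases intro: hill_rec_single)

lemma descents_Suc:
  assumes g: "g \<in> Gs (Suc n)"
  shows "{w. hill_rec (-1) g GOne w} =
    (\<lambda>(s, v). LG g # LA (ainv (anch g s)) # v) ` (SIGMA s:UNIV. {v. hill_rec (-1) (entry g s) GOne v})"
proof (intro equalityI subsetI)
  fix w assume "w \<in> {w. hill_rec (-1) g GOne w}"
  then have "hill_rec (-1) g GOne w" by simp
  then show "w \<in> (\<lambda>(s, v). LG g # LA (ainv (anch g s)) # v) `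
                 (SIGMA s:UNIV. {v. hill_rec (-1) (entry g s) GOne v})"
  proof cases
    case hill_rec_single
    with g Gs_disjoint[of GOne 0 "Suc n"] show ?thesis by auto
  next
    case (hill_rec_Cons a h' v)
    then have "h' \<in> Gs n"
      using Gprime_Gs_height[OF hill_rec_Gprime] height_Gs[OF g] by fastforce
    with hill_rec_Cons obtain s where "h' = entry g s" "a = ainv (anch g s)"
      using anchored_from_above[OF g] by blast
    with hill_rec_Cons show ?thesis by (auto intro!: image_eqI[of _ _ "(s, v)"])
  qed
next
  fix w assume "w \<in> (\<lambda>(s, v). LG g # LA (ainv (anch g s)) # v) `
                 (SIGMA s:UNIV. {v. hill_rec (-1) (entry g s) GOne v})"
  then obtain s v where w: "w = LG g # LA (ainv (anch g s)) # v"
    and v: "hill_rec (-1) (entry g s) GOne v" by auto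
  have "g \<in> Gprime" using g Gprime_iff by blast
  moreover have "anchored g (ainv (anch g s)) (entry g s)"
    using anchored_from_above[OF g entry_Gs[OF g]] by blast
  moreover have "int (height (entry g s)) = int (height g) + -1"
    using height_Gs[OF g] height_Gs[OF entry_Gs[OF g]] by simp
  ultimately show "w \<in> {w. hill_rec (-1) g GOne w}"
    using w v by (simp add: hill_rec_Cons)
qed

lemma card_descents: "g \<in> Gs n \<Longrightarrow> card {w. hill_rec (-1) g GOne w} = 2 ^ n"
proof (induction n arbitrary: g)
  case 0
  then show ?case by (simp add: descents_GOne)
next
  case (Suc n)
  let ?D = "\<lambda>s. {v. hill_rec (-1) (entry g s) GOne v}"
  have card_D: "card (?D s) = 2 ^ n" for s
    using Suc.IH[OF entry_Gs[OF Suc.prems]] .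
  have "inj_on (\<lambda>(s, v). LG g # LA (ainv (anch g s)) # v) (SIGMA s:UNIV. ?D s)"
  proof (rule inj_onI, clarsimp)
    fix s t v
    assume "hill_rec (-1) (entry g s) GOne v" "hill_rec (-1) (entry g t) GOne v"
      and "anch g s = anch g t"
    then have "entry g s = entry g t" using hill_rec_hd by (metis letter.inject(1))
    with \<open>anch g s = anch g t\<close> show "s = t" using entry_anch_inj[OF Suc.prems] by simp
  qed
  then have "card {w. hill_rec (-1) g GOne w} = card (SIGMA s:UNIV. ?D s)"
    unfolding descents_Suc[OF Suc.prems] by (rule card_image)
  also have "\<dots> = 2 ^ Suc n"
  proof -
    have "finite (?D s)" for s
      using card_D by (metis card.infinite power_not_zero zero_neq_numeral)
    then show ?thesis by (simp add: UNIV_side card_D)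
  qed
  finally show ?case .
qed

lemma card_ascents:
  assumes "g \<in> Gs n"
  shows "card {w. hill_rec 1 GOne g w} = 2 ^ n"
proof -
  have "bij_betw reverse_word {w. hill_rec (-1) g GOne w} {w. hill_rec 1 GOne g w}"
    by (rule bij_betw_byWitness[where f' = reverse_word]) (auto dest: hill_rec_reverse_word)
  with card_descents[OF assms] show ?thesis by (simp add: bij_betw_same_card)
qed

lemma ascent_length: "hill_rec 1 GOne g u \<Longrightarrow> length u = 2 * height g + 1"
  using hill_rec_length[of 1 GOne g u] hill_rec_hd[of 1 GOne g u] by simp

lemma inj_on_join_ascent_descent:
  "inj_on (\<lambda>(u, v). u @ tl v) ({u. hill_rec 1 GOne g u} \<times> {v. hill_rec (-1) g GOne v})"
proof (rule inj_onI, clarsimp)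
  fix u v u' v'
  assume "hill_rec 1 GOne g u" "hill_rec 1 GOne g u'"
    and "hill_rec (-1) g GOne v" "hill_rec (-1) g GOne v'"
  then have u: "length u = length u'" and v: "hd v = hd v'" "v \<noteq> []" "v' \<noteq> []"
    by (simp_all add: ascent_length hill_rec_hd)
  assume "u @ tl v = u' @ tl v'"
  with u have "u = u'" "tl v = tl v'" by simp_all
  moreover have "v = v'" using v \<open>tl v = tl v'\<close> by (metis list.collapse)
  ultimately show "u = u' \<and> v = v'" by simp
qed

theorem lemma4p3:
  fixes n :: nat and g :: "'x gen"
  assumes "n \<ge> 1" and "g \<in> Gs n"
  shows "card {w. uphill GOne g w} = 2 ^ n \<and>
         card {w. downhill g GOne w} = 2 ^ n \<and>
         card {w. mountain g w} = 2 ^ (2 * n)"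
proof -
  let ?U = "{u. hill_rec 1 GOne g u}" and ?D = "{v. hill_rec (-1) g GOne v}"
  have "g \<in> G5" using assms by (cases n) (auto simp: G5_iff)
  then have "{w. mountain g w} = (\<lambda>(u, v). u @ tl v) ` (?U \<times> ?D)"
    by (auto simp: mountain_def uphill_def downhill_def hill_iff_hill_rec)
  then have "card {w. mountain g w} = card ?U * card ?D"
    by (simp add: card_image[OF inj_on_join_ascent_descent] card_cartesian_product)
  with card_ascents[OF assms(2)] card_descents[OF assms(2)] show ?thesis
    by (simp add: uphill_def downhill_def hill_iff_hill_rec power_add mult_2)
qed

end
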